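(* Let $\Phi=\forall u_1\ldots\forall u_n\exists e_1(D_1)\ldots\exists e_m(D_m).\varphi$ be a DQBF, let $\tau$ be a (partial) assignment to a set $A$ of arbiter variables, and let $\rho\in[U]$. If $\varphi^\rho\wedge\tau^\rho$ is unsatisfiable, then some subclause of the clause $\neg\tau^\rho$ (the disjunction of the negations of the literals in $\tau^\rho$) is derivable from $\Phi$ in the $\forall$Exp+Res calculus.
   Context: For a set $V$ of variables, $[V]$ is the set of assignments $V\to\{\textsc{true},\textsc{false}\}$; assignments are identified with terms of the literals they make true, and $\sigma|_W$ denotes restriction. A DQBF is $\Phi=\forall u_1\ldots\forall u_n\exists e_1(D_1)\ldots\exists e_m(D_m).\varphi$ with pairwise distinct variables, $U=\{u_i\}$, $E=\{e_j\}$, dependency sets $D(e_j)=D_j\subseteq U$, and $\varphi$ a CNF over $U\cup E$. For $e\in E$ and $\sigma\in[D(e)]$, $e^\sigma$ denotes an annotated (arbiter) variable, different annotations giving different variables; for a literal $\ell$ on $e$, $\ell^\sigma$ is the literal on $e^\sigma$ of the same polarity. For a partial assignment $\tau$ to arbiter variables and $\rho\in[U]$, $\tau^\rho=\{\ell^\sigma\in\tau\mid\rho\models\sigma\}$. For $\rho\in[U]$, $\varphi^\rho=\{\{x^{\rho|_{D(\mathit{var}(x))}}\mid x\in C,\ \mathit{var}(x)\in E\}\mid C\in\varphi,\ \text{no universal literal of }C\text{ is satisfied by }\rho\}$. The $\forall$Exp+Res calculus for $\Phi$ has two rules: (axiom) for any clause $C\in\varphi$ and any $\sigma\in[U]$ falsifying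 every universal literal of $C$, derive $\{\ell^{\sigma|_{D(\mathit{var}(\ell))}}\mid\ell\in C,\ \mathit{var}(\ell)\in E\}$; (resolution) from $C_1\cup\{x^\tau\}$ and $C_2\cup\{\neg x^\tau\}$ derive $C_1\cup C_2$. A clause is derivable from $\Phi$ if it is the last clause of a finite sequence each of whose clauses is obtained by one of these rules from earlier clauses. *)

theory Defs
  imports Main
begin

datatype 'a lit = Pos 'a | Neg 'a

fun var :: "'a lit \<Rightarrow> 'a" where
  "var (Pos x) = x" | "var (Neg x) = x"

fun negate :: "'a lit \<Rightarrow> 'a lit" where
  "negate (Pos x) = Neg x" | "negate (Neg x) = Pos x"

type_synonym 'a clause = "'a lit set"
type_synonym 'a cnf = "'a clause set"

definition assignments :: "'v set \<Rightarrow> ('v \<rightharpoonup> bool) set" where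
  "assignments V = {\<sigma>. dom \<sigma> = V}"

fun lit_true :: "('v \<rightharpoonup> bool) \<Rightarrow> 'v lit \<Rightarrow> bool" where
  "lit_true \<rho> (Pos x) = (\<rho> x = Some True)"
| "lit_true \<rho> (Neg x) = (\<rho> x = Some False)"

text \<open>rho models sigma (sigma seen as a term): sigma agrees with rho on dom sigma.\<close>
definition models :: "('v \<rightharpoonup> bool) \<Rightarrow> ('v \<rightharpoonup> bool) \<Rightarrow> bool" where
  "models \<rho> \<sigma> \<longleftrightarrow> \<sigma> \<subseteq>\<^sub>m \<rho>"

definition dqbf :: "'v set \<Rightarrow> 'v set \<Rightarrow> ('v \<Rightarrow> 'v set) \<Rightarrow> 'v cnf \<Rightarrow> bool" where
  "dqbf U E D \<phi> \<longleftrightarrow> finite U \<and> finite E \<and> U \<inter> E = {} \<and>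
     (\<forall>e\<in>E. D e \<subseteq> U) \<and> finite \<phi> \<and>
     (\<forall>C\<in>\<phi>. finite C \<and> (\<forall>l\<in>C. var l \<in> U \<union> E))"

text \<open>Arbiter variables: pairs (e, sigma) standing for e^sigma.\<close>
type_synonym 'v arb = "'v \<times> ('v \<rightharpoonup> bool)"

fun annot :: "'v lit \<Rightarrow> ('v \<rightharpoonup> bool) \<Rightarrow> 'v arb lit" where
  "annot (Pos x) \<sigma> = Pos (x, \<sigma>)"
| "annot (Neg x) \<sigma> = Neg (x, \<sigma>)"

definition arbiter_vars :: "'v set \<Rightarrow> ('v \<Rightarrow> 'v set) \<Rightarrow> 'v arb set" where
  "arbiter_vars E D = {(e, \<sigma>). e \<in> E \<and> \<sigma> \<in> assignments (D e)}"

text \<open>A partial assignment to a set of arbiter variables, represented as the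
  (consistent) set of arbiter literals it makes true.\<close>
definition partial_arb_assignment :: "'v set \<Rightarrow> ('v \<Rightarrow> 'v set) \<Rightarrow> 'v arb lit set \<Rightarrow> bool" where
  "partial_arb_assignment E D \<tau> \<longleftrightarrow>
     (\<forall>l\<in>\<tau>. var l \<in> arbiter_vars E D) \<and> (\<forall>l\<in>\<tau>. negate l \<notin> \<tau>)"

definition restrict_arb :: "'v arb lit set \<Rightarrow> ('v \<rightharpoonup> bool) \<Rightarrow> 'v arb lit set" where
  "restrict_arb \<tau> \<rho> = {l \<in> \<tau>. models \<rho> (snd (var l))}"

definition expand_clause :: "'v set \<Rightarrow> ('v \<Rightarrow> 'v set) \<Rightarrow> 'v clause \<Rightarrow> ('v \<rightharpoonup> bool) \<Rightarrow> 'v arb clause" where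
  "expand_clause E D C \<sigma> = {annot x (\<sigma> |` D (var x)) | x. x \<in> C \<and> var x \<in> E}"

definition expand_cnf :: "'v set \<Rightarrow> 'v set \<Rightarrow> ('v \<Rightarrow> 'v set) \<Rightarrow> 'v cnf \<Rightarrow> ('v \<rightharpoonup> bool) \<Rightarrow> 'v arb cnf" where
  "expand_cnf U E D \<phi> \<rho> =
     {expand_clause E D C \<rho> | C. C \<in> \<phi> \<and> \<not> (\<exists>l\<in>C. var l \<in> U \<and> lit_true \<rho> l)}"

fun sat_lit :: "('a \<Rightarrow> bool) \<Rightarrow> 'a lit \<Rightarrow> bool" where
  "sat_lit \<alpha> (Pos x) = \<alpha> x" | "sat_lit \<alpha> (Neg x) = (\<not> \<alpha> x)"

definition satisfiable_with :: "'a cnf \<Rightarrow> 'a lit set \<Rightarrow> bool" where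
  "satisfiable_with F T \<longleftrightarrow>
     (\<exists>\<alpha>. (\<forall>C\<in>F. \<exists>l\<in>C. sat_lit \<alpha> l) \<and> (\<forall>l\<in>T. sat_lit \<alpha> l))"

inductive expres_derivable :: "'v set \<Rightarrow> 'v set \<Rightarrow> ('v \<Rightarrow> 'v set) \<Rightarrow> 'v cnf \<Rightarrow> 'v arb clause \<Rightarrow> bool"
  for U E D \<phi> where
  axiom: "\<lbrakk> C \<in> \<phi>; \<sigma> \<in> assignments U;
            \<forall>l\<in>C. var l \<in> U \<longrightarrow> \<not> lit_true \<sigma> l \<rbrakk>
          \<Longrightarrow> expres_derivable U E D \<phi> (expand_clause E D C \<sigma>)"
| resolution: "\<lbrakk> expres_derivable U E D \<phi> (C1 \<union> {x});
                 expres_derivable U E D \<phi> (C2 \<union> {negate x}) \<rbrakk>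
          \<Longrightarrow> expres_derivable U E D \<phi> (C1 \<union> C2)"

end

theory Submission
  imports Defs
begin

text \<open>This is the completeness of resolution, in the form that tolerates a fixed partial
  assignment \<open>T\<close>. Induct on the number of variables of \<open>\<phi>\<^sup>\<rho>\<close> not assigned by \<open>T\<close>. If all are
  assigned, the assignment read off from \<open>T\<close> falsifies some clause, which then consists of
  negations of literals of \<open>T\<close>. Otherwise pick an unassigned variable \<open>x\<close>: extending \<open>T\<close> by
  \<open>\<not>x\<close> and by \<open>x\<close> gives derivable subclauses of \<open>\<not>T \<or> x\<close> and \<open>\<not>T \<or> \<not>x\<close>; either one of them
  avoids \<open>x\<close>, or resolving them on \<open>x\<close> gives a subclause of \<open>\<not>T\<close>. Every clause of \<open>\<phi>\<^sup>\<rho>\<close> is an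
  axiom of \<open>\<forall>\<close>Exp+Res, and derivability is closed under resolution.\<close>

definition consistent :: "'a lit set \<Rightarrow> bool" where
  "consistent T \<longleftrightarrow> (\<forall>l\<in>T. negate l \<notin> T)"

definition resolution_closed :: "('a clause \<Rightarrow> bool) \<Rightarrow> bool" where
  "resolution_closed P \<longleftrightarrow>
     (\<forall>C1 C2 x. P (C1 \<union> {x}) \<longrightarrow> P (C2 \<union> {negate x}) \<longrightarrow> P (C1 \<union> C2))"

lemma negate_negate [simp]: "negate (negate l) = l"
  by (cases l) auto

lemma var_negate [simp]: "var (negate l) = var l"
  by (cases l) auto

lemma var_eq_imp_eq_or_negate: "var k = var l \<Longrightarrow> k = l \<or> k = negate l"
  by (cases k; cases l) auto

lemma sat_lit_term_model:
  assumes "consistent T" and "l \<in> T"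
  shows "sat_lit (\<lambda>x. Pos x \<in> T) l"
  using assms by (cases l) (force simp: consistent_def)+

lemma consistent_insert:
  assumes "consistent T" and "var y \<notin> var ` T"
  shows "consistent (insert y T)"
proof -
  have "y \<notin> T" "negate y \<notin> T"
    using assms(2) by (metis image_eqI, metis image_eqI var_negate)
  moreover have "negate y \<noteq> y"
    by (cases y) auto
  ultimately show ?thesis
    using assms(1) by (auto simp: consistent_def)
qed

lemma falsified_clause_subset_negate_term:
  assumes "\<forall>k\<in>T. sat_lit \<alpha> k" and "var ` C \<subseteq> var ` T" and "\<forall>l\<in>C. \<not> sat_lit \<alpha> l"
  shows "C \<subseteq> negate ` T"
proof
  fix l assume "l \<in> C"
  then obtain k where k: "k \<in> T" "var k = var l"
    using assms(2) by force
  have "k \<noteq> l"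
    using k(1) \<open>l \<in> C\<close> assms(1,3) by blast
  then have "negate l \<in> T"
    using k var_eq_imp_eq_or_negate by blast
  then show "l \<in> negate ` T"
    by (metis image_eqI negate_negate)
qed

lemma unsatisfiable_with_insert:
  "\<not> satisfiable_with F T \<Longrightarrow> \<not> satisfiable_with F (insert y T)"
  by (auto simp: satisfiable_with_def)

lemma resolution_closed_resolve_subclauses:
  assumes "resolution_closed P"
    and "P C1" "C1 \<subseteq> insert (Pos x) (negate ` T)"
    and "P C2" "C2 \<subseteq> insert (Neg x) (negate ` T)"
  shows "\<exists>C\<subseteq>negate ` T. P C"
proof (cases "Pos x \<in> C1 \<and> Neg x \<in> C2")
  case True
  then have "C1 = (C1 - {Pos x}) \<union> {Pos x}" "C2 = (C2 - {Neg x}) \<union> {negate (Pos x)}"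
    by auto
  then have "P ((C1 - {Pos x}) \<union> (C2 - {Neg x}))"
    using assms(1,2,4) unfolding resolution_closed_def by metis
  moreover have "(C1 - {Pos x}) \<union> (C2 - {Neg x}) \<subseteq> negate ` T"
    using assms(3,5) by auto
  ultimately show ?thesis
    by blast
next
  case False
  then have "C1 \<subseteq> negate ` T \<or> C2 \<subseteq> negate ` T"
    using assms(3,5) by auto
  then show ?thesis
    using assms(2,4) by blast
qed

lemma resolution_closed_refutes_term:
  assumes closed: "resolution_closed P" and F: "\<forall>C\<in>F. P C"
    and V: "finite V" "\<forall>C\<in>F. var ` C \<subseteq> V"
    and "consistent T" and "\<not> satisfiable_with F T"
  shows "\<exists>C\<subseteq>negate ` T. P C"
  using assms(5,6)
proof (induction "card (V - var ` T)" arbitrary: T rule: less_induct)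
  case less
  show ?case
  proof (cases "V \<subseteq> var ` T")
    case True
    let ?\<alpha> = "\<lambda>x. Pos x \<in> T"
    have "\<forall>k\<in>T. sat_lit ?\<alpha> k"
      using sat_lit_term_model less.prems(1) by blast
    then have "\<not> (\<forall>C\<in>F. \<exists>l\<in>C. sat_lit ?\<alpha> l)"
      using less.prems(2) unfolding satisfiable_with_def by blast
    then obtain C where "C \<in> F" "\<forall>l\<in>C. \<not> sat_lit ?\<alpha> l"
      by blast
    moreover have "var ` C \<subseteq> var ` T"
      using \<open>C \<in> F\<close> V(2) True by blast
    ultimately have "C \<subseteq> negate ` T"
      using falsified_clause_subset_negate_term \<open>\<forall>k\<in>T. sat_lit ?\<alpha> k\<close> by blast
    then show ?thesis
      using \<open>C \<in> F\<close> F by blast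
  next
    case False
    then obtain x where x: "x \<in> V" "x \<notin> var ` T"
      by auto
    have IH: "\<exists>C\<subseteq>negate ` insert y T. P C" if "var y = x" for y
    proof -
      have "V - var ` insert y T = (V - var ` T) - {x}"
        using that by auto
      then have "card (V - var ` insert y T) < card (V - var ` T)"
        using x V(1) by (metis DiffI card_Diff1_less finite_Diff)
      moreover have "consistent (insert y T)"
        using consistent_insert[OF less.prems(1)] x(2) that by simp
      moreover have "\<not> satisfiable_with F (insert y T)"
        using unsatisfiable_with_insert less.prems(2) .
      ultimately show ?thesis
        by (rule less.hyps)
    qed
    obtain C1 where "P C1" "C1 \<subseteq> insert (Pos x) (negate ` T)"
      using IH[of "Neg x"] by auto
    moreover obtain C2 where "P C2" "C2 \<subseteq> insert (Neg x) (negate ` T)"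
      using IH[of "Pos x"] by auto
    ultimately show ?thesis
      by (rule resolution_closed_resolve_subclauses[OF closed])
  qed
qed

lemma resolution_closed_expres_derivable:
  "resolution_closed (expres_derivable U E D \<phi>)"
  by (auto simp: resolution_closed_def intro: expres_derivable.resolution)

lemma expres_derivable_expand_cnf:
  assumes "\<rho> \<in> assignments U" and "C \<in> expand_cnf U E D \<phi> \<rho>"
  shows "expres_derivable U E D \<phi> C"
  using assms by (auto simp: expand_cnf_def intro: expres_derivable.axiom)

lemma finite_Union_expand_cnf:
  assumes "dqbf U E D \<phi>"
  shows "finite (\<Union> (expand_cnf U E D \<phi> \<rho>))"
proof -
  have "\<Union> (expand_cnf U E D \<phi> \<rho>) \<subseteq> (\<lambda>x. annot x (\<rho> |` D (var x))) ` \<Union> \<phi>"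
    by (auto simp: expand_cnf_def expand_clause_def)
  moreover have "finite (\<Union> \<phi>)"
    using assms by (auto simp: dqbf_def)
  ultimately show ?thesis
    using finite_subset by blast
qed

lemma consistent_restrict_arb:
  "partial_arb_assignment E D \<tau> \<Longrightarrow> consistent (restrict_arb \<tau> \<rho>)"
  by (auto simp: partial_arb_assignment_def restrict_arb_def consistent_def)

theorem lemma6:
  fixes U E :: "'v set" and D :: "'v \<Rightarrow> 'v set" and \<phi> :: "'v cnf"
    and \<tau> :: "'v arb lit set" and \<rho> :: "'v \<rightharpoonup> bool"
  assumes "dqbf U E D \<phi>"
    and "partial_arb_assignment E D \<tau>"
    and "\<rho> \<in> assignments U"
    and "\<not> satisfiable_with (expand_cnf U E D \<phi> \<rho>) (restrict_arb \<tau> \<rho>)"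
  shows "\<exists>C. C \<subseteq> negate ` restrict_arb \<tau> \<rho> \<and> expres_derivable U E D \<phi> C"
proof -
  let ?F = "expand_cnf U E D \<phi> \<rho>"
  have "\<forall>C\<in>?F. expres_derivable U E D \<phi> C"
    using expres_derivable_expand_cnf[OF assms(3)] by blast
  moreover have "finite (var ` \<Union> ?F)"
    using finite_Union_expand_cnf[OF assms(1)] by blast
  moreover have "\<forall>C\<in>?F. var ` C \<subseteq> var ` \<Union> ?F"
    by blast
  ultimately show ?thesis
    by (rule resolution_closed_refutes_term[OF resolution_closed_expres_derivable _ _ _
          consistent_restrict_arb[OF assms(2)] assms(4)])
qed

end
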